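(* For every $\tau\in\mathbb C$ and every VK parameters $\alpha,\beta,\gamma$, as formal power series in $t$, $$1+\sum_{k\ge1}\epsilon_{\alpha,\beta,\gamma}(\pi_\tau g_k)\,t^k=e^{\gamma\theta\tau t}\prod_{i=1}^\infty\frac{1+\theta\beta_i(\tau-\theta\beta_i)t}{(1-\alpha_i(\tau+\alpha_i)t)^{\theta}}.$$
   Context: Fix $\theta>0$. $\Lambda$ is the algebra of symmetric functions in $x_1,x_2,\dots$; $g_k\in\Lambda$ are defined by $1+\sum_{k\ge1}g_kt^k=\prod_j(1-x_jt)^{-\theta}$. VK parameters: $\alpha_1\ge\alpha_2\ge\dots\ge0$, $\beta_1\ge\beta_2\ge\dots\ge0$, $\gamma\ge0$, $\sum(\alpha_i+\beta_i)<\infty$. $\epsilon_{\alpha,\beta,\gamma}:\Lambda\to\mathbb C$ is the algebra homomorphism with $1+\sum_k\epsilon_{\alpha,\beta,\gamma}(g_k)t^k=e^{\gamma\theta t}\prod_i\frac{1+\beta_i\theta t}{(1-\alpha_it)^\theta}$. For $\tau\in\mathbb C$, $\pi_\tau:\Lambda\to\Lambda$ is the homomorphism $(\pi_\tau f)(x_1,x_2,\dots)=f(x_1(x_1+\tau),x_2(x_2+\tau),\dots)$. *)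

theory Defs
  imports Complex_Main "HOL-Library.Poly_Mapping" "HOL-Computational_Algebra.Formal_Power_Series"
begin

text \<open>A formal power series in countably many variables x_0, x_1, ... with complex
coefficients: the coefficient of the monomial x^a, a a finitely supported exponent vector.\<close>
type_synonym sfun = "(nat \<Rightarrow>\<^sub>0 nat) \<Rightarrow> complex"

definition mdeg :: "(nat \<Rightarrow>\<^sub>0 nat) \<Rightarrow> nat" where
  "mdeg a = (\<Sum>j\<in>Poly_Mapping.keys a. Poly_Mapping.lookup a j)"

definition sf_symmetric :: "sfun \<Rightarrow> bool" where
  "sf_symmetric f \<longleftrightarrow>
     (\<forall>a b (\<sigma>::nat \<Rightarrow> nat). bij \<sigma> \<longrightarrow> (\<forall>j. Poly_Mapping.lookup b j = Poly_Mapping.lookup a (\<sigma> j)) \<longrightarrow> f b = f a)"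

definition Lam :: "sfun set" where
  "Lam = {f. sf_symmetric f \<and> (\<exists>d. \<forall>a. f a \<noteq> 0 \<longrightarrow> mdeg a \<le> d)}"

definition sf_add :: "sfun \<Rightarrow> sfun \<Rightarrow> sfun" where
  "sf_add f g = (\<lambda>a. f a + g a)"

definition sf_scale :: "complex \<Rightarrow> sfun \<Rightarrow> sfun" where
  "sf_scale c f = (\<lambda>a. c * f a)"

definition sf_mult :: "sfun \<Rightarrow> sfun \<Rightarrow> sfun" where
  "sf_mult f g = (\<lambda>a. \<Sum>b\<in>{b. \<forall>j. Poly_Mapping.lookup b j \<le> Poly_Mapping.lookup a j}. f b * g (a - b))"

definition sf_one :: sfun where
  "sf_one = (\<lambda>a. if a = 0 then 1 else 0)"

definition sf_alg_hom :: "(sfun \<Rightarrow> complex) \<Rightarrow> bool" where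
  "sf_alg_hom E \<longleftrightarrow>
     (\<forall>f\<in>Lam. \<forall>g\<in>Lam. E (sf_add f g) = E f + E g \<and> E (sf_mult f g) = E f * E g) \<and>
     (\<forall>c. \<forall>f\<in>Lam. E (sf_scale c f) = c * E f) \<and> E sf_one = 1"

text \<open>g_k: coefficient of t^k in prod_j (1 - x_j t)^(-theta), expanded:
  (1 - x t)^(-theta) = sum_n (theta)_n / n! x^n t^n.\<close>
definition gk :: "real \<Rightarrow> nat \<Rightarrow> sfun" where
  "gk \<theta> k = (\<lambda>a. if mdeg a = k
      then (\<Prod>j\<in>Poly_Mapping.keys a. pochhammer (complex_of_real \<theta>) (Poly_Mapping.lookup a j) / fact (Poly_Mapping.lookup a j))
      else 0)"

text \<open>pi_tau: substitution x_j := x_j (x_j + tau); coefficientwise,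
  x^b |-> prod_j sum_m (b_j choose m) tau^(b_j - m) x_j^(b_j + m).\<close>
definition pi_tau :: "complex \<Rightarrow> sfun \<Rightarrow> sfun" where
  "pi_tau \<tau> f = (\<lambda>a. \<Sum>b\<in>{b. \<forall>j. Poly_Mapping.lookup b j \<le> Poly_Mapping.lookup a j}.
      f b * (\<Prod>j\<in>Poly_Mapping.keys a. of_nat (Poly_Mapping.lookup b j choose (Poly_Mapping.lookup a j - Poly_Mapping.lookup b j))
                            * \<tau> ^ (2 * Poly_Mapping.lookup b j - Poly_Mapping.lookup a j)))"

definition fps_one_minus_pow :: "complex \<Rightarrow> complex \<Rightarrow> complex fps" where
  "fps_one_minus_pow d s = fps_binomial s oo (- fps_const d * fps_X)"

definition fps_infprod_convergent :: "(nat \<Rightarrow> complex fps) \<Rightarrow> bool" where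
  "fps_infprod_convergent F \<longleftrightarrow> (\<forall>n. convergent (\<lambda>N. fps_nth (\<Prod>i<N. F i) n))"

definition fps_infprod :: "(nat \<Rightarrow> complex fps) \<Rightarrow> complex fps" where
  "fps_infprod F = Abs_fps (\<lambda>n. lim (\<lambda>N. fps_nth (\<Prod>i<N. F i) n))"

definition VK_params :: "(nat \<Rightarrow> real) \<Rightarrow> (nat \<Rightarrow> real) \<Rightarrow> real \<Rightarrow> bool" where
  "VK_params \<alpha> \<beta> \<gamma> \<longleftrightarrow> antimono \<alpha> \<and> antimono \<beta> \<and> (\<forall>i. \<alpha> i \<ge> 0 \<and> \<beta> i \<ge> 0) \<and>
     \<gamma> \<ge> 0 \<and> summable (\<lambda>i. \<alpha> i + \<beta> i)"

definition is_eps :: "real \<Rightarrow> (nat \<Rightarrow> real) \<Rightarrow> (nat \<Rightarrow> real) \<Rightarrow> real \<Rightarrow> (sfun \<Rightarrow> complex) \<Rightarrow> bool" where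
  "is_eps \<theta> \<alpha> \<beta> \<gamma> E \<longleftrightarrow> sf_alg_hom E \<and>
     Abs_fps (\<lambda>k. if k = 0 then 1 else E (gk \<theta> k)) =
       fps_exp (complex_of_real (\<gamma> * \<theta>)) *
       fps_infprod (\<lambda>i. (1 + fps_const (complex_of_real (\<beta> i * \<theta>)) * fps_X) *
                        fps_one_minus_pow (complex_of_real (\<alpha> i)) (- complex_of_real \<theta>))"

end

theory Submission
  imports Defs
begin

text \<open>
  Put \<open>T = X\<^sup>2 / (1 + \<tau> X)\<close> and \<open>V = - X / (1 + \<tau> X)\<close>. Then \<open>X + V = \<tau> T\<close> and \<open>X V = - T\<close>, so
  \<open>1 - x (x + \<tau>) T = (1 - x X) (1 - x V)\<close>, and the generating series
  \<open>G(t) = \<Sum>\<^sub>k g\<^sub>k t\<^sup>k = \<Prod>\<^sub>j (1 - x\<^sub>j t)\<^sup>-\<^sup>\<theta>\<close> satisfies \<open>(\<pi>\<^sub>\<tau> G)(T) = G(X) G(V)\<close>.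
  Since \<open>X\<close> and \<open>V\<close> are the two roots of \<open>Y\<^sup>2 - \<tau> T Y - T\<close>, a product \<open>A(X) A(V)\<close> is a power series
  \<open>\<Psi>\<^sub>\<tau>(A)\<close> in \<open>T\<close> whose \<open>k\<close>-th coefficient is a fixed quadratic form in \<open>A\<^sub>0, \<dots>, A\<^sub>2\<^sub>k\<close>. Hence
  \<open>\<pi>\<^sub>\<tau> g\<^sub>k\<close> is that quadratic form in the \<open>g\<^sub>m\<close>, and applying the specialisation \<open>\<epsilon>\<close> gives
  \<open>\<Sum>\<^sub>k \<epsilon>(\<pi>\<^sub>\<tau> g\<^sub>k) t\<^sup>k = \<Psi>\<^sub>\<tau>(\<Sum>\<^sub>k \<epsilon>(g\<^sub>k) t\<^sup>k)\<close>.

  \<open>\<Psi>\<^sub>\<tau>\<close> is multiplicative and coefficientwise continuous; it maps \<open>e\<^sup>c\<^sup>t\<close> to \<open>e\<^sup>\<tau>\<^sup>c\<^sup>t\<close>, \<open>1 + b t\<close> to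
  \<open>1 + b (\<tau> - b) t\<close> and \<open>(1 - a t)\<^sup>-\<^sup>\<theta>\<close> to \<open>(1 - a (\<tau> + a) t)\<^sup>-\<^sup>\<theta>\<close>. Applied factor by factor to the
  product defining \<open>\<epsilon>\<close>, this gives the formula. The new infinite product converges because
  \<open>\<Psi>\<^sub>\<tau>\<close> is continuous and the original factors have nonnegative coefficients with
  \<open>\<Sum> (\<alpha>\<^sub>i + \<beta>\<^sub>i) < \<infinity>\<close>.
\<close>

unbundle fps_syntax

lemma fps_linear_ode_unique:
  fixes F G D Q :: "'a::{idom,semiring_char_0} fps"
  assumes "D $ 0 = 1"
    and "D * fps_deriv F = Q * F" and "D * fps_deriv G = Q * G"
    and "F $ 0 = G $ 0"
  shows "F = G"
proof -
  define H where "H = F - G"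
  have ode: "D * fps_deriv H = Q * H" using assms(2,3) by (simp add: H_def algebra_simps)
  have "\<forall>m\<le>n. H $ m = 0" for n
  proof (induction n)
    case 0
    then show ?case using assms(4) by (simp add: H_def)
  next
    case (Suc n)
    \<comment> \<open>\<open>D$0 = 1\<close> makes coefficient \<open>n\<close> of \<open>D * H'\<close> equal to \<open>(n+1) * H$(n+1)\<close>\<close>
    have "(D * fps_deriv H) $ n = (\<Sum>i\<in>{0}. D $ i * (of_nat (n - i + 1) * H $ (n - i + 1)))"
      unfolding fps_mult_nth fps_deriv_nth using Suc.IH
      by (intro sum.mono_neutral_right) auto
    moreover have "(Q * H) $ n = 0" using Suc.IH by (simp add: fps_mult_nth)
    ultimately have "of_nat (n + 1) * H $ (n + 1) = 0" using ode assms(1) by simp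
    then have "H $ Suc n = 0" by (simp del: of_nat_Suc)
    then show ?case using Suc.IH le_Suc_eq by auto
  qed
  then show ?thesis by (auto simp: H_def fps_eq_iff)
qed

lemma fps_compose_right_cancel:
  fixes a b c :: "'a::idom fps"
  assumes "a $ 0 = 0" and "a \<noteq> 0" and "b oo a = c oo a"
  shows "b = c"
proof (rule ccontr)
  define R where "R = b - c"
  assume "b \<noteq> c"
  then have "R \<noteq> 0" by (simp add: R_def)
  define S where "S = fps_shift (subdegree R) R"
  have "R = S * fps_X ^ subdegree R" unfolding S_def by (rule subdegree_decompose)
  then have "R oo a = (S oo a) * a ^ subdegree R"
    by (metis assms(1) fps_compose_mult_distrib fps_compose_power fps_X_fps_compose_startby0)
  moreover have "(S oo a) $ 0 \<noteq> 0" using \<open>R \<noteq> 0\<close> by (simp add: S_def)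
  then have "S oo a \<noteq> 0" by (metis fps_zero_nth)
  ultimately have "R oo a \<noteq> 0" using assms(2) by simp
  with assms(3) show False by (simp add: R_def fps_compose_sub_distrib)
qed

lemma binomial_ode_of_coeff_rec:
  fixes h :: "nat \<Rightarrow> 'a::comm_ring_1"
  assumes "\<And>n. of_nat (Suc n) * h (Suc n) = (c + of_nat n) * h n"
  shows "(1 - fps_X) * fps_deriv (Abs_fps h) = fps_const c * Abs_fps h"
proof (rule fps_ext)
  fix n
  have "((1 - fps_X) * fps_deriv (Abs_fps h)) $ n =
        of_nat (Suc n) * h (Suc n) - (if n = 0 then 0 else of_nat n * h n)"
    by (cases n) (simp_all add: algebra_simps fps_X_mult_nth del: of_nat_Suc)
  also have "\<dots> = c * h n" using assms[of n] by (cases n) (simp_all add: algebra_simps del: of_nat_Suc)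
  finally show "((1 - fps_X) * fps_deriv (Abs_fps h)) $ n = (fps_const c * Abs_fps h) $ n"
    by simp
qed

text \<open>Multiplicativity \<open>(1-x)^{-c} (1-y)^{-c} = (1 - (x+y-xy))^{-c}\<close>, phrased via the ODE characterising
  \<open>(1-X)^{-c}\<close>: both sides solve \<open>(1-x)(1-y) F' = c ((1-y) x' + (1-x) y') F\<close>.\<close>
lemma binomial_ode_compose_mult:
  fixes H x y :: "'a::{idom,semiring_char_0} fps"
  assumes ode: "(1 - fps_X) * fps_deriv H = fps_const c * H" and H0: "H $ 0 = 1"
    and x0: "x $ 0 = 0" and y0: "y $ 0 = 0"
  shows "(H oo x) * (H oo y) = H oo (x + y - x * y)"
proof -
  have key: "(1 - z) * (fps_deriv H oo z) = fps_const c * (H oo z)" if z0: "z $ 0 = 0" for z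
  proof -
    have "((1 - fps_X) * fps_deriv H) oo z = (fps_const c * H) oo z" using ode by simp
    then show ?thesis
      by (simp add: fps_compose_mult_distrib[OF z0] fps_compose_sub_distrib
          fps_X_fps_compose_startby0[OF z0])
  qed
  define z where "z = x + y - x * y"
  have z0: "z $ 0 = 0" using x0 y0 by (simp add: z_def)
  define D where "D = (1 - x) * (1 - y)"
  define Q where "Q = fps_const c * (fps_deriv x * (1 - y) + fps_deriv y * (1 - x))"
  have "D * fps_deriv ((H oo x) * (H oo y)) =
        (1 - y) * fps_deriv x * ((1 - x) * (fps_deriv H oo x)) * (H oo y)
        + (1 - x) * fps_deriv y * ((1 - y) * (fps_deriv H oo y)) * (H oo x)"
    by (simp add: D_def fps_compose_deriv[OF x0] fps_compose_deriv[OF y0] algebra_simps)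
  also have "\<dots> = Q * ((H oo x) * (H oo y))"
    unfolding key[OF x0] key[OF y0] by (simp add: Q_def algebra_simps)
  finally have lhs: "D * fps_deriv ((H oo x) * (H oo y)) = Q * ((H oo x) * (H oo y))" .
  have "D = 1 - z" by (simp add: D_def z_def algebra_simps)
  then have "D * fps_deriv (H oo z) = fps_deriv z * ((1 - z) * (fps_deriv H oo z))"
    by (simp only: fps_compose_deriv[OF z0] mult_ac)
  also have "\<dots> = Q * (H oo z)"
    unfolding key[OF z0] by (simp add: Q_def z_def algebra_simps)
  finally have rhs: "D * fps_deriv (H oo z) = Q * (H oo z)" .
  have "D $ 0 = 1" using x0 y0 by (simp add: D_def fps_mult_nth)
  from fps_linear_ode_unique[OF this lhs rhs] show ?thesis
    by (simp add: z_def fps_mult_nth H0)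
qed

lemma fps_exp_compose_add:
  fixes x y :: "'a::field_char_0 fps"
  assumes x0: "x $ 0 = 0" and y0: "y $ 0 = 0"
  shows "(fps_exp c oo x) * (fps_exp c oo y) = fps_exp c oo (x + y)"
proof -
  have deriv: "fps_deriv (fps_exp c oo z) = fps_const c * fps_deriv z * (fps_exp c oo z)"
    if "z $ 0 = 0" for z
    using that by (simp add: fps_compose_deriv fps_compose_mult_distrib algebra_simps)
  define Q where "Q = fps_const c * (fps_deriv x + fps_deriv y)"
  have lhs: "1 * fps_deriv ((fps_exp c oo x) * (fps_exp c oo y)) = Q * ((fps_exp c oo x) * (fps_exp c oo y))"
    by (simp add: deriv[OF x0] deriv[OF y0] Q_def algebra_simps)
  have rhs: "1 * fps_deriv (fps_exp c oo (x + y)) = Q * (fps_exp c oo (x + y))"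
    using x0 y0 by (simp add: deriv Q_def algebra_simps)
  show ?thesis
    by (rule fps_linear_ode_unique[OF _ lhs rhs]) (simp_all add: fps_mult_nth)
qed

lemma fps_compose_scaled_X_compose:
  fixes f z :: "'a::idom fps"
  assumes "z $ 0 = 0"
  shows "(f oo (fps_const a * fps_X)) oo z = f oo (fps_const a * z)"
  using assms by (subst fps_compose_assoc[symmetric]) (simp_all add: fps_compose_mult_distrib)

lemma fps_const_half_mult_double: "fps_const (1/2) * (x + x) = (x :: 'a::field_char_0 fps)"
proof -
  have "fps_const (1/2) * (2 :: 'a fps) = 1"
    by (simp add: numeral_fps_const)
  then show ?thesis by (metis mult.assoc mult_2 mult_1)
qed

lemma fps_const_prod: "fps_const (\<Prod>i\<in>S. f i) = (\<Prod>i\<in>S. fps_const (f i) :: 'a::comm_ring_1 fps)"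
  by (induction S rule: infinite_finite_induct) (simp_all flip: fps_const_mult)

lemma fps_one_plus_const_X_mult_nth:
  fixes F :: "'a::comm_ring_1 fps"
  shows "((1 + fps_const c * fps_X) * F) $ n = F $ n + (if n = 0 then 0 else c * F $ (n - 1))"
  by (cases n) (simp_all add: distrib_right mult.assoc fps_X_mult_nth)

lemma fps_linear_power_nth:
  fixes u v :: "'a::comm_ring_1"
  shows "((fps_const u + fps_const v * fps_X) ^ b) $ m = of_nat (b choose m) * u ^ (b - m) * v ^ m"
proof -
  have "(fps_const u + fps_const v * fps_X) ^ b =
        (\<Sum>k\<le>b. fps_const (of_nat (b choose k) * v ^ k * u ^ (b - k)) * fps_X ^ k)"
    unfolding add.commute[of "fps_const u"] binomial_ring
    by (intro sum.cong refl)
       (simp add: power_mult_distrib mult_ac flip: fps_const_power fps_const_mult fps_of_nat)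
  also have "\<dots> $ m = (\<Sum>k\<le>b. if m = k then of_nat (b choose k) * v ^ k * u ^ (b - k) else 0)"
    by (simp add: fps_sum_nth if_distrib cong: if_cong)
  finally show ?thesis
    by (auto simp: binomial_eq_0 mult_ac)
qed

section \<open>The negative binomial series\<close>

definition negbin_coeff :: "'a::field_char_0 \<Rightarrow> nat \<Rightarrow> 'a" where
  "negbin_coeff c n = pochhammer c n / fact n"

definition negbin_series :: "'a::field_char_0 \<Rightarrow> 'a fps" where
  "negbin_series c = Abs_fps (negbin_coeff c)"

lemma negbin_coeff_0 [simp]: "negbin_coeff c 0 = 1"
  by (simp add: negbin_coeff_def)

lemma negbin_coeff_Suc:
  "of_nat (Suc n) * negbin_coeff c (Suc n) = (c + of_nat n) * negbin_coeff c n"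
  by (simp add: negbin_coeff_def pochhammer_rec' field_simps del: of_nat_Suc)

lemma negbin_series_nth [simp]: "negbin_series c $ n = negbin_coeff c n"
  by (simp add: negbin_series_def)

lemma negbin_series_ode: "(1 - fps_X) * fps_deriv (negbin_series c) = fps_const c * negbin_series c"
  unfolding negbin_series_def by (rule binomial_ode_of_coeff_rec) (rule negbin_coeff_Suc)

lemma fps_one_minus_pow_neg:
  "fps_one_minus_pow d (- c) = negbin_series c oo (fps_const d * fps_X)"
proof (rule fps_ext)
  fix n
  have "fps_one_minus_pow d (- c) $ n = (- d) ^ n * (- c gchoose n)"
    unfolding fps_one_minus_pow_def
    by (metis fps_binomial_nth fps_const_neg fps_nth_compose_linear mult_minus_left)
  also have "\<dots> = ((- d) * (- 1)) ^ n * negbin_coeff c n"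
    unfolding gbinomial_pochhammer negbin_coeff_def power_mult_distrib by simp
  also have "\<dots> = d ^ n * negbin_coeff c n"
    by simp
  finally show "fps_one_minus_pow d (- c) $ n = (negbin_series c oo (fps_const d * fps_X)) $ n"
    by simp
qed

text \<open>The coefficient of \<open>y^A\<close> in \<open>(1 - u y)^{-c} (1 - v y)^{-c} = (1 - (u + v) y + u v y^2)^{-c}\<close>.\<close>
lemma negbin_coeff_convolution:
  fixes u v :: "'a::field_char_0 fps"
  shows "(\<Sum>i\<le>A. fps_const (negbin_coeff c i * negbin_coeff c (A - i)) * u ^ i * v ^ (A - i)) =
         (\<Sum>b\<le>A. fps_const (negbin_coeff c b * of_nat (b choose (A - b))) *
                   (u + v) ^ (2 * b - A) * (- (u * v)) ^ (A - b))"
proof -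
  define H :: "'a fps fps" where "H = Abs_fps (\<lambda>n. fps_const (negbin_coeff c n))"
  have ode: "(1 - fps_X) * fps_deriv H = fps_const (fps_const c) * H"
    unfolding H_def
    by (rule binomial_ode_of_coeff_rec)
       (simp only: negbin_coeff_Suc fps_const_add fps_const_mult flip: fps_of_nat)
  define x where "x = fps_const u * (fps_X :: 'a fps fps)"
  define y where "y = fps_const v * (fps_X :: 'a fps fps)"
  have "fps_const (u + v) = fps_const u + fps_const v" "fps_const (- (u * v)) = - (fps_const u * fps_const v)"
    by simp_all
  then have xy: "x + y - x * y = fps_X * (fps_const (u + v) + fps_const (- (u * v)) * fps_X)"
    unfolding x_def y_def
    by (simp only:) (simp add: algebra_simps del: fps_const_mult fps_const_add fps_const_neg)
  have "(H oo x) * (H oo y) = H oo (x + y - x * y)"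
    by (rule binomial_ode_compose_mult[OF ode]) (simp_all add: H_def x_def y_def)
  then have "((H oo x) * (H oo y)) $ A = (H oo (x + y - x * y)) $ A" by simp
  moreover have "((H oo x) * (H oo y)) $ A =
      (\<Sum>i\<le>A. fps_const (negbin_coeff c i * negbin_coeff c (A - i)) * u ^ i * v ^ (A - i))"
    unfolding fps_mult_nth atLeast0AtMost x_def y_def fps_nth_compose_linear
    by (intro sum.cong refl) (simp add: H_def mult_ac)
  moreover have "(H oo (x + y - x * y)) $ A = (\<Sum>b\<le>A. fps_const (negbin_coeff c b) *
      (fps_X ^ b * (fps_const (u + v) + fps_const (- (u * v)) * fps_X) ^ b) $ A)"
    unfolding xy fps_compose_nth atLeast0AtMost power_mult_distrib
    by (simp add: H_def)
  moreover have "(fps_X ^ b * (fps_const (u + v) + fps_const (- (u * v)) * fps_X) ^ b) $ A =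
      of_nat (b choose (A - b)) * (u + v) ^ (2 * b - A) * (- (u * v)) ^ (A - b)" if "b \<le> A" for b
  proof -
    have "b - (A - b) = 2 * b - A" using that by arith
    then show ?thesis using that by (simp add: fps_X_power_mult_nth fps_linear_power_nth)
  qed
  ultimately show ?thesis
    by (simp add: mult.assoc flip: fps_of_nat fps_const_mult)
qed

section \<open>The series \<open>T = X^2/(1 + \<tau> X)\<close> and the operator \<open>pi_series\<close>\<close>

definition T_tau :: "'a::field \<Rightarrow> 'a fps" where
  "T_tau \<tau> = fps_X ^ 2 * inverse (1 + fps_const \<tau> * fps_X)"

definition V_tau :: "'a::field \<Rightarrow> 'a fps" where
  "V_tau \<tau> = - fps_X * inverse (1 + fps_const \<tau> * fps_X)"

lemma T_tau_nth_0 [simp]: "T_tau \<tau> $ 0 = 0"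
  by (simp add: T_tau_def)

lemma V_tau_nth_0 [simp]: "V_tau \<tau> $ 0 = 0"
  by (simp add: V_tau_def)

lemma T_tau_neq_0: "T_tau \<tau> \<noteq> 0"
proof -
  have "inverse (1 + fps_const \<tau> * fps_X) $ 0 \<noteq> 0" by simp
  then show ?thesis by (auto simp: T_tau_def)
qed

lemma X_plus_V_tau: "fps_X + V_tau \<tau> = fps_const \<tau> * T_tau \<tau>"
proof -
  have "(1 + fps_const \<tau> * fps_X) * inverse (1 + fps_const \<tau> * fps_X) = 1"
    by (rule inverse_mult_eq_1') simp
  then have "fps_X + V_tau \<tau> = fps_X * ((1 + fps_const \<tau> * fps_X) * inverse (1 + fps_const \<tau> * fps_X))
      - fps_X * inverse (1 + fps_const \<tau> * fps_X)"
    by (simp add: V_tau_def)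
  also have "\<dots> = fps_const \<tau> * T_tau \<tau>"
    by (simp add: T_tau_def algebra_simps power2_eq_square)
  finally show ?thesis .
qed

lemma X_times_V_tau: "fps_X * V_tau \<tau> = - T_tau \<tau>"
  by (simp add: V_tau_def T_tau_def power2_eq_square)

lemma negbin_coeff_convolution_X_V_tau:
  "(\<Sum>i\<le>A. fps_const (negbin_coeff c i * negbin_coeff c (A - i)) * fps_X ^ i * V_tau \<tau> ^ (A - i)) =
   (\<Sum>b\<le>A. fps_const (negbin_coeff c b * of_nat (b choose (A - b)) * \<tau> ^ (2 * b - A)) * T_tau \<tau> ^ b)"
  unfolding negbin_coeff_convolution X_plus_V_tau X_times_V_tau minus_minus
proof (intro sum.cong refl)
  fix b assume "b \<in> {..A}"
  show "fps_const (negbin_coeff c b * of_nat (b choose (A - b))) * (fps_const \<tau> * T_tau \<tau>) ^ (2 * b - A) *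
      T_tau \<tau> ^ (A - b) = fps_const (negbin_coeff c b * of_nat (b choose (A - b)) * \<tau> ^ (2 * b - A)) * T_tau \<tau> ^ b"
  proof (cases "A \<le> 2 * b")
    case True
    then have "T_tau \<tau> ^ (2 * b - A) * T_tau \<tau> ^ (A - b) = T_tau \<tau> ^ b"
      using \<open>b \<in> {..A}\<close> by (simp flip: power_add)
    then show ?thesis
      by (simp add: power_mult_distrib mult_ac flip: fps_const_power fps_const_mult)
  next
    case False
    then have "b choose (A - b) = 0" by (intro binomial_eq_0) arith
    then show ?thesis by simp
  qed
qed

text \<open>\<open>lucas \<tau> d\<close> expresses the power sum \<open>X^d + V^d\<close> in terms of \<open>T\<close> (Newton's recursion).\<close>
fun lucas :: "'a::comm_ring_1 \<Rightarrow> nat \<Rightarrow> 'a fps" where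
  "lucas \<tau> 0 = 2"
| "lucas \<tau> (Suc 0) = fps_const \<tau> * fps_X"
| "lucas \<tau> (Suc (Suc d)) = fps_const \<tau> * fps_X * lucas \<tau> (Suc d) + fps_X * lucas \<tau> d"

lemma lucas_compose_T_tau: "lucas \<tau> d oo T_tau \<tau> = fps_X ^ d + V_tau \<tau> ^ d"
proof (induction \<tau> d rule: lucas.induct)
  case (1 \<tau>)
  then show ?case by simp
next
  case (2 \<tau>)
  then show ?case by (simp add: fps_compose_mult_distrib X_plus_V_tau)
next
  case (3 \<tau> d)
  have "lucas \<tau> (Suc (Suc d)) oo T_tau \<tau> =
      fps_const \<tau> * T_tau \<tau> * (lucas \<tau> (Suc d) oo T_tau \<tau>) + T_tau \<tau> * (lucas \<tau> d oo T_tau \<tau>)"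
    by (simp add: fps_compose_mult_distrib fps_compose_add_distrib)
  also have "\<dots> = (fps_X + V_tau \<tau>) * (fps_X ^ Suc d + V_tau \<tau> ^ Suc d)
      - (fps_X * V_tau \<tau>) * (fps_X ^ d + V_tau \<tau> ^ d)"
    using 3 by (simp only: X_plus_V_tau X_times_V_tau) simp
  also have "\<dots> = fps_X ^ Suc (Suc d) + V_tau \<tau> ^ Suc (Suc d)"
    by (simp add: algebra_simps)
  finally show ?case .
qed

lemma lucas_nth_eq_0: "2 * k < d \<Longrightarrow> lucas \<tau> d $ k = 0"
proof (induction \<tau> d arbitrary: k rule: lucas.induct)
  case (3 \<tau> d)
  then show ?case
    by (cases k) (simp_all add: mult.assoc fps_X_mult_nth)
qed auto

definition sym_kernel :: "'a::field_char_0 \<Rightarrow> nat \<Rightarrow> nat \<Rightarrow> 'a fps" where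
  "sym_kernel \<tau> m n = fps_const (1/2) * (- fps_X) ^ min m n * lucas \<tau> (max m n - min m n)"

lemma sym_kernel_compose_T_tau:
  "sym_kernel \<tau> m n oo T_tau \<tau> = fps_const (1/2) * (fps_X ^ m * V_tau \<tau> ^ n + fps_X ^ n * V_tau \<tau> ^ m)"
proof -
  have "sym_kernel \<tau> m n oo T_tau \<tau> = fps_const (1/2) * (fps_X * V_tau \<tau>) ^ min m n *
      (fps_X ^ (max m n - min m n) + V_tau \<tau> ^ (max m n - min m n))"
    unfolding sym_kernel_def
    by (simp add: fps_compose_mult_distrib fps_compose_uminus lucas_compose_T_tau X_times_V_tau
        flip: fps_compose_power)
  moreover have "(fps_X * V_tau \<tau>) ^ min m n * (fps_X ^ (max m n - min m n) + V_tau \<tau> ^ (max m n - min m n))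
      = fps_X ^ m * V_tau \<tau> ^ n + fps_X ^ n * V_tau \<tau> ^ m"
    by (cases "m \<le> n")
       (auto simp: max_def min_def power_mult_distrib distrib_left mult_ac simp flip: power_add)
  ultimately show ?thesis by simp
qed

lemma sym_kernel_nth_eq_0:
  assumes "2 * k < m + n"
  shows "sym_kernel \<tau> m n $ k = 0"
proof -
  have "(fps_X ^ min m n * lucas \<tau> (max m n - min m n)) $ k = 0"
  proof (cases "min m n \<le> k")
    case True
    then have "2 * (k - min m n) < max m n - min m n" using assms by (simp add: max_def min_def) arith
    then show ?thesis using True by (simp add: fps_X_power_mult_nth lucas_nth_eq_0)
  qed (auto simp: fps_X_power_mult_nth)
  moreover have "(- 1 :: 'a fps) ^ min m n = fps_const ((- 1) ^ min m n)"
    by (metis fps_const_1_eq_1 fps_const_neg fps_const_power)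
  ultimately show ?thesis
    by (simp add: sym_kernel_def power_minus[of fps_X] mult.assoc)
qed

text \<open>\<open>pi_series \<tau>\<close> is the operator \<open>\<Psi>\<^sub>\<tau>\<close>; the kernel is chosen so that \<open>pi_series \<tau> A (T) = A(X) A(V)\<close>.\<close>
definition pi_series :: "'a::field_char_0 \<Rightarrow> 'a fps \<Rightarrow> 'a fps" where
  "pi_series \<tau> A = Abs_fps (\<lambda>k. \<Sum>m\<le>2*k. \<Sum>n\<le>2*k. sym_kernel \<tau> m n $ k * A $ m * A $ n)"

lemma pi_series_nth: "pi_series \<tau> A $ k = (\<Sum>m\<le>2*k. \<Sum>n\<le>2*k. sym_kernel \<tau> m n $ k * A $ m * A $ n)"
  by (simp add: pi_series_def)

lemma pi_series_polynomial:
  assumes "\<And>m. M < m \<Longrightarrow> A $ m = 0"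
  shows "pi_series \<tau> A = (\<Sum>m\<le>M. \<Sum>n\<le>M. fps_const (A $ m * A $ n) * sym_kernel \<tau> m n)"
proof (rule fps_ext)
  fix k
  have extend: "(\<Sum>m\<le>N. \<Sum>n\<le>N. g m n) = (\<Sum>m\<le>N'. \<Sum>n\<le>N'. g m n)"
    if "N \<le> N'" and "\<And>m n. N < m \<or> N < n \<Longrightarrow> g m n = 0" for N N' and g :: "nat \<Rightarrow> nat \<Rightarrow> 'a"
  proof -
    have "(\<Sum>m\<le>N. \<Sum>n\<le>N. g m n) = (\<Sum>m\<le>N. \<Sum>n\<le>N'. g m n)"
      using that by (intro sum.cong refl sum.mono_neutral_left) auto
    also have "\<dots> = (\<Sum>m\<le>N'. \<Sum>n\<le>N'. g m n)"
      using that by (intro sum.mono_neutral_left) (auto intro!: sum.neutral)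
    finally show ?thesis .
  qed
  have "pi_series \<tau> A $ k = (\<Sum>m\<le>max (2*k) M. \<Sum>n\<le>max (2*k) M. sym_kernel \<tau> m n $ k * A $ m * A $ n)"
    unfolding pi_series_nth by (rule extend) (auto simp: sym_kernel_nth_eq_0)
  also have "\<dots> = (\<Sum>m\<le>M. \<Sum>n\<le>M. sym_kernel \<tau> m n $ k * A $ m * A $ n)"
    by (rule extend[symmetric]) (auto simp: assms)
  finally show "pi_series \<tau> A $ k = (\<Sum>m\<le>M. \<Sum>n\<le>M. fps_const (A $ m * A $ n) * sym_kernel \<tau> m n) $ k"
    by (simp add: fps_sum_nth mult_ac)
qed

lemma pi_series_compose_T_tau: "pi_series \<tau> A oo T_tau \<tau> = A * (A oo V_tau \<tau>)"
proof (rule fps_ext)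
  fix N
  \<comment> \<open>coefficient \<open>N\<close> on either side only involves \<open>A $ m\<close> with \<open>m \<le> 2 N\<close>\<close>
  define M :: nat where "M = 2 * N"
  define P where "P = fps_cutoff (Suc M) A"
  have P: "P = (\<Sum>m\<le>M. fps_const (A $ m) * fps_X ^ m)"
    by (rule fps_ext) (simp add: P_def fps_sum_nth if_distrib cong: if_cong)
  have "(pi_series \<tau> A oo T_tau \<tau>) $ N = (pi_series \<tau> P oo T_tau \<tau>) $ N"
    unfolding fps_compose_nth pi_series_nth by (intro sum.cong refl) (auto simp: P_def M_def)
  also have "pi_series \<tau> P = (\<Sum>m\<le>M. \<Sum>n\<le>M. fps_const (A $ m * A $ n) * sym_kernel \<tau> m n)"
    by (subst pi_series_polynomial[of M]) (auto simp: P_def intro!: sum.cong)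
  also have "\<dots> oo T_tau \<tau> = (\<Sum>m\<le>M. \<Sum>n\<le>M. fps_const (A $ m * A $ n) * (fps_const (1/2) *
      (fps_X ^ m * V_tau \<tau> ^ n + fps_X ^ n * V_tau \<tau> ^ m)))"
    by (simp add: fps_compose_sum_distrib fps_compose_mult_distrib sym_kernel_compose_T_tau)
  also have "\<dots> = (\<Sum>m\<le>M. \<Sum>n\<le>M. fps_const (A $ m * A $ n) * (fps_X ^ m * V_tau \<tau> ^ n))"
  proof -
    define S where "S = (\<Sum>m\<le>M. \<Sum>n\<le>M. fps_const (A $ m * A $ n) * (fps_X ^ m * V_tau \<tau> ^ n))"
    have swap: "(\<Sum>m\<le>M. \<Sum>n\<le>M. fps_const (A $ m * A $ n) * (fps_X ^ n * V_tau \<tau> ^ m)) = S"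
      unfolding S_def by (subst sum.swap) (simp add: mult.commute)
    have "(\<Sum>m\<le>M. \<Sum>n\<le>M. fps_const (A $ m * A $ n) * (fps_const (1/2) *
        (fps_X ^ m * V_tau \<tau> ^ n + fps_X ^ n * V_tau \<tau> ^ m))) = fps_const (1/2) *
        (S + (\<Sum>m\<le>M. \<Sum>n\<le>M. fps_const (A $ m * A $ n) * (fps_X ^ n * V_tau \<tau> ^ m)))"
      unfolding S_def
      by (simp add: sum_distrib_left sum.distrib ring_distribs mult.left_commute del: fps_const_mult)
    also have "\<dots> = S" unfolding swap fps_const_half_mult_double ..
    finally show ?thesis unfolding S_def .
  qed
  also have "\<dots> = P * (P oo V_tau \<tau>)"
    by (simp add: P fps_compose_sum_distrib fps_compose_mult_distrib sum_product mult_ac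
        flip: fps_compose_power fps_const_mult)
  also have "\<dots> $ N = (A * (A oo V_tau \<tau>)) $ N"
    unfolding fps_mult_nth fps_compose_nth
    by (intro sum.cong refl arg_cong2[where f = "(*)"]) (auto simp: P_def M_def)
  finally show "(pi_series \<tau> A oo T_tau \<tau>) $ N = (A * (A oo V_tau \<tau>)) $ N" .
qed

lemma pi_series_eqI:
  assumes "B oo T_tau \<tau> = A * (A oo V_tau \<tau>)"
  shows "pi_series \<tau> A = B"
  by (rule fps_compose_right_cancel[where a = "T_tau \<tau>", OF T_tau_nth_0 T_tau_neq_0])
     (simp add: pi_series_compose_T_tau assms)

lemma pi_series_mult: "pi_series \<tau> (A * B) = pi_series \<tau> A * pi_series \<tau> B"
  by (rule pi_series_eqI) (simp add: fps_compose_mult_distrib pi_series_compose_T_tau mult_ac)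

lemma pi_series_one: "pi_series \<tau> 1 = 1"
  by (rule pi_series_eqI) simp

lemma pi_series_prod: "pi_series \<tau> (\<Prod>i<(N::nat). f i) = (\<Prod>i<N. pi_series \<tau> (f i))"
  by (induction N) (simp_all add: pi_series_one pi_series_mult)

lemma pi_series_exp: "pi_series \<tau> (fps_exp c) = fps_exp (\<tau> * c)"
proof (rule pi_series_eqI)
  have "fps_exp (\<tau> * c) oo T_tau \<tau> = fps_exp c oo (fps_X + V_tau \<tau>)"
    using fps_compose_scaled_X_compose[of "T_tau \<tau>" "fps_exp c" \<tau>] by (simp add: X_plus_V_tau)
  also have "\<dots> = fps_exp c * (fps_exp c oo V_tau \<tau>)"
    using fps_exp_compose_add[of fps_X "V_tau \<tau>" c] by simp
  finally show "fps_exp (\<tau> * c) oo T_tau \<tau> = fps_exp c * (fps_exp c oo V_tau \<tau>)" .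
qed

lemma pi_series_linear: "pi_series \<tau> (1 + fps_const b * fps_X) = 1 + fps_const (b * (\<tau> - b)) * fps_X"
proof (rule pi_series_eqI)
  have "(1 + fps_const b * fps_X) * (1 + fps_const b * V_tau \<tau>) =
      1 + fps_const b * (fps_X + V_tau \<tau>) + fps_const b * fps_const b * (fps_X * V_tau \<tau>)"
    by (simp only: ring_distribs mult_1 mult_1_right add.assoc mult_ac)
  also have "\<dots> = (1 + fps_const (b * (\<tau> - b)) * fps_X) oo T_tau \<tau>"
  proof -
    have "fps_const (b * (\<tau> - b)) = fps_const b * fps_const \<tau> - fps_const b * fps_const b"
      by (simp add: algebra_simps)
    then show ?thesis
      unfolding X_plus_V_tau X_times_V_tau
      by (simp add: fps_compose_add_distrib fps_compose_mult_distrib fps_compose_sub_distrib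
          ring_distribs mult_ac del: fps_const_mult)
  qed
  finally show "(1 + fps_const (b * (\<tau> - b)) * fps_X) oo T_tau \<tau> =
      (1 + fps_const b * fps_X) * ((1 + fps_const b * fps_X) oo V_tau \<tau>)"
    by (simp add: fps_compose_add_distrib fps_compose_mult_distrib)
qed

lemma pi_series_binomial:
  fixes H :: "'a::field_char_0 fps"
  assumes "(1 - fps_X) * fps_deriv H = fps_const c * H" and "H $ 0 = 1"
  shows "pi_series \<tau> (H oo (fps_const a * fps_X)) = H oo (fps_const (a * (\<tau> + a)) * fps_X)"
proof (rule pi_series_eqI)
  have "fps_const a * fps_X + fps_const a * V_tau \<tau> - fps_const a * fps_X * (fps_const a * V_tau \<tau>)
      = fps_const a * (fps_X + V_tau \<tau>) - fps_const a * fps_const a * (fps_X * V_tau \<tau>)"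
    by (simp only: ring_distribs mult_ac)
  also have "\<dots> = fps_const (a * (\<tau> + a)) * T_tau \<tau>"
  proof -
    have "fps_const (a * (\<tau> + a)) = fps_const a * fps_const \<tau> + fps_const a * fps_const a"
      by (simp add: algebra_simps)
    then show ?thesis
      unfolding X_plus_V_tau X_times_V_tau by (simp add: ring_distribs mult_ac del: fps_const_mult)
  qed
  finally have "(H oo (fps_const a * fps_X)) * (H oo (fps_const a * V_tau \<tau>)) =
      H oo (fps_const (a * (\<tau> + a)) * T_tau \<tau>)"
    using binomial_ode_compose_mult[OF assms, of "fps_const a * fps_X" "fps_const a * V_tau \<tau>"] by simp
  then show "H oo (fps_const (a * (\<tau> + a)) * fps_X) oo T_tau \<tau> =
      (H oo (fps_const a * fps_X)) * (H oo (fps_const a * fps_X) oo V_tau \<tau>)"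
    by (simp add: fps_compose_scaled_X_compose)
qed

lemma pi_series_nth_0: "pi_series \<tau> A $ 0 = (A $ 0) ^ 2"
  by (simp add: pi_series_nth sym_kernel_def power2_eq_square)

lemma pi_series_vk_factor:
  "pi_series \<tau> ((1 + fps_const b * fps_X) * fps_one_minus_pow a (- c)) =
     (1 + fps_const (b * (\<tau> - b)) * fps_X) * fps_one_minus_pow (a * (\<tau> + a)) (- c)"
  unfolding fps_one_minus_pow_neg pi_series_mult pi_series_linear
  by (simp add: pi_series_binomial[OF negbin_series_ode])

section \<open>Coefficientwise convergence of infinite products\<close>

lemma prod_fps_nth_nonneg:
  fixes g :: "nat \<Rightarrow> real fps"
  assumes "\<And>i j. 0 \<le> g i $ j"
  shows "0 \<le> (\<Prod>i<N. g i) $ j"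
proof (induction N arbitrary: j)
  case (Suc N)
  then show ?case unfolding prod.lessThan_Suc fps_mult_nth by (intro sum_nonneg mult_nonneg_nonneg assms) auto
qed simp

lemma prod_fps_nth_le_prod_sum:
  fixes g :: "nat \<Rightarrow> real fps"
  assumes nonneg: "\<And>i j. 0 \<le> g i $ j" and "j \<le> n"
  shows "(\<Prod>i<N. g i) $ j \<le> (\<Prod>i<N. \<Sum>l\<le>n. g i $ l)"
  using assms(2)
proof (induction N arbitrary: j)
  case (Suc N)
  let ?B = "\<Prod>i<N. \<Sum>l\<le>n. g i $ l"
  have "(\<Prod>i<Suc N. g i) $ j = (\<Sum>l=0..j. (\<Prod>i<N. g i) $ l * g N $ (j - l))"
    unfolding prod.lessThan_Suc fps_mult_nth ..
  also have "\<dots> \<le> (\<Sum>l=0..j. ?B * g N $ (j - l))"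
    using Suc by (intro sum_mono mult_right_mono) (auto simp: nonneg)
  also have "\<dots> = ?B * (\<Sum>l=0..j. g N $ l)"
    unfolding sum_distrib_left by (rule sum.reindex_bij_witness[of _ "\<lambda>l. j - l" "\<lambda>l. j - l"]) auto
  also have "\<dots> \<le> ?B * (\<Sum>l\<le>n. g N $ l)"
    using Suc.prems unfolding atLeast0AtMost
    by (intro mult_left_mono sum_mono2 prod_nonneg) (auto simp: nonneg sum_nonneg)
  finally show ?case by (simp add: mult.commute)
qed simp

lemma convergent_prod_nth_nonneg:
  fixes g :: "nat \<Rightarrow> real fps"
  assumes nonneg: "\<And>i j. 0 \<le> g i $ j" and one: "\<And>i. g i $ 0 = 1"
    and summable: "summable (\<lambda>i. \<Sum>j\<in>{1..n}. g i $ j)"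
  shows "convergent (\<lambda>N. (\<Prod>i<N. g i) $ n)"
proof -
  define s where "s = (\<lambda>i. \<Sum>j\<in>{1..n}. g i $ j)"
  have s_nonneg: "0 \<le> s i" for i by (simp add: s_def sum_nonneg nonneg)
  have "(\<Prod>i<N. g i) $ n \<le> (\<Prod>i<Suc N. g i) $ n" for N
  proof -
    have "(\<Prod>i<N. g i) $ n = (\<Prod>i<N. g i) $ n * g N $ (n - n)" by (simp add: one)
    also have "\<dots> \<le> (\<Sum>l=0..n. (\<Prod>i<N. g i) $ l * g N $ (n - l))"
      by (rule member_le_sum) (auto intro: mult_nonneg_nonneg prod_fps_nth_nonneg nonneg)
    finally show ?thesis unfolding prod.lessThan_Suc fps_mult_nth .
  qed
  then have "incseq (\<lambda>N. (\<Prod>i<N. g i) $ n)" by (rule incseq_SucI)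
  moreover have "(\<Prod>i<N. g i) $ n \<le> exp (suminf s)" for N
  proof -
    have "(\<Sum>l\<le>n. g i $ l) = 1 + s i" for i
      by (simp add: s_def one atMost_atLeast0 sum.atLeast_Suc_atMost)
    then have "(\<Prod>i<N. g i) $ n \<le> (\<Prod>i<N. 1 + s i)"
      using prod_fps_nth_le_prod_sum[of g n n N] nonneg by simp
    also have "\<dots> \<le> (\<Prod>i<N. exp (s i))"
      by (intro prod_mono) (simp add: s_nonneg add_nonneg_nonneg)
    also have "\<dots> = exp (\<Sum>i<N. s i)" by (simp add: exp_sum)
    also have "\<dots> \<le> exp (suminf s)"
      using summable s_nonneg unfolding s_def[symmetric] by (intro exp_mono sum_le_suminf) auto
    finally show ?thesis .
  qed
  then have "Bseq (\<lambda>N. (\<Prod>i<N. g i) $ n)"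
    by (intro BseqI') (simp add: prod_fps_nth_nonneg nonneg)
  ultimately show ?thesis by (meson Bseq_monoseq_convergent incseq_imp_monoseq)
qed

definition fps_of_real :: "real fps \<Rightarrow> 'a::real_algebra_1 fps" where
  "fps_of_real F = Abs_fps (\<lambda>n. of_real (F $ n))"

lemma fps_of_real_nth [simp]: "fps_of_real F $ n = of_real (F $ n)"
  by (simp add: fps_of_real_def)

lemma fps_of_real_mult: "fps_of_real (F * G) = fps_of_real F * fps_of_real G"
  by (rule fps_ext) (simp add: fps_mult_nth)

lemma fps_of_real_prod: "fps_of_real (\<Prod>i<(N::nat). F i) = (\<Prod>i<N. fps_of_real (F i))"
proof (induction N)
  case 0
  show ?case by (rule fps_ext) simp
qed (simp add: fps_of_real_mult)

lemma negbin_coeff_of_real: "negbin_coeff (of_real c) n = (of_real (negbin_coeff c n) :: 'a::{real_field,field_char_0})"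
  by (simp add: negbin_coeff_def pochhammer_of_real)

text \<open>The factors of \<open>\<epsilon>\<close>, as real series so that their coefficients can be compared.\<close>
definition vk_factor :: "real \<Rightarrow> real \<Rightarrow> real \<Rightarrow> real fps" where
  "vk_factor \<theta> a b = (1 + fps_const b * fps_X) * (negbin_series \<theta> oo (fps_const a * fps_X))"

lemma vk_factor_nth:
  "vk_factor \<theta> a b $ j =
     a ^ j * negbin_coeff \<theta> j + (if j = 0 then 0 else b * (a ^ (j - 1) * negbin_coeff \<theta> (j - 1)))"
  unfolding vk_factor_def fps_one_plus_const_X_mult_nth fps_nth_compose_linear negbin_series_nth ..

lemma fps_of_real_vk_factor:
  "fps_of_real (vk_factor \<theta> a b) =
     (1 + fps_const (complex_of_real b) * fps_X) * fps_one_minus_pow (of_real a) (- of_real \<theta>)"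
  unfolding fps_one_minus_pow_neg
  by (rule fps_ext)
     (simp only: fps_of_real_nth vk_factor_nth fps_one_plus_const_X_mult_nth fps_nth_compose_linear
       negbin_series_nth, simp add: negbin_coeff_of_real)

lemma vk_factor_nth_nonneg: "0 < \<theta> \<Longrightarrow> 0 \<le> a \<Longrightarrow> 0 \<le> b \<Longrightarrow> 0 \<le> vk_factor \<theta> a b $ j"
  by (simp add: vk_factor_nth negbin_coeff_def pochhammer_nonneg)

lemma vk_factor_nth_0 [simp]: "vk_factor \<theta> a b $ 0 = 1"
  by (simp add: vk_factor_nth)

lemma vk_factor_coeff_sum_le:
  assumes "0 < \<theta>" "0 \<le> a" "a \<le> A" "0 \<le> b"
  shows "(\<Sum>j\<in>{1..n}. vk_factor \<theta> a b $ j) \<le> (a + b) * (\<Sum>j\<le>n. (A + 1) ^ j * negbin_coeff \<theta> j)"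
proof -
  define c where "c j = (A + 1) ^ j * negbin_coeff \<theta> j" for j
  have c_nonneg: "0 \<le> c j" for j
    using assms by (simp add: c_def negbin_coeff_def pochhammer_nonneg)
  have "vk_factor \<theta> a b $ j \<le> a * c j + b * c (j - 1)" if "j \<in> {1..n}" for j
  proof -
    have w: "0 \<le> negbin_coeff \<theta> i" for i
      using assms by (simp add: negbin_coeff_def pochhammer_nonneg)
    have pow: "a ^ i \<le> (A + 1) ^ i" for i
      using assms by (intro power_mono) auto
    have "a ^ j = a * a ^ (j - 1)" using that by (cases j) auto
    also have "\<dots> \<le> a * (A + 1) ^ j"
      using assms pow[of "j - 1"] by (intro mult_left_mono order_trans[OF _ power_increasing[of "j - 1" j]]) auto
    finally have "a ^ j * negbin_coeff \<theta> j \<le> a * (A + 1) ^ j * negbin_coeff \<theta> j"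
      using w by (rule mult_right_mono)
    then have "a ^ j * negbin_coeff \<theta> j \<le> a * c j"
      by (simp add: c_def mult.assoc)
    moreover have "b * (a ^ (j - 1) * negbin_coeff \<theta> (j - 1)) \<le> b * c (j - 1)"
      using assms w pow by (simp add: c_def mult_left_mono mult_right_mono)
    ultimately show ?thesis using that by (simp add: vk_factor_nth)
  qed
  then have "(\<Sum>j\<in>{1..n}. vk_factor \<theta> a b $ j) \<le> a * (\<Sum>j\<in>{1..n}. c j) + b * (\<Sum>j\<in>{1..n}. c (j - 1))"
    unfolding sum_distrib_left sum.distrib[symmetric] by (rule sum_mono)
  also have "\<dots> \<le> a * (\<Sum>j\<le>n. c j) + b * (\<Sum>j\<le>n. c j)"
  proof (intro add_mono mult_left_mono)
    show "(\<Sum>j\<in>{1..n}. c (j - 1)) \<le> (\<Sum>j\<le>n. c j)"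
      using sum.atLeast1_atMost_eq[of "\<lambda>j. c (j - 1)" n] by (auto intro!: sum_mono2 simp: c_nonneg)
  qed (use assms c_nonneg in \<open>auto intro: sum_mono2\<close>)
  finally show ?thesis by (simp add: c_def algebra_simps)
qed

lemma summable_vk_factor_coeff_sums:
  assumes "0 < \<theta>" and "VK_params \<alpha> \<beta> \<gamma>"
  shows "summable (\<lambda>i. \<Sum>j\<in>{1..n}. vk_factor \<theta> (\<alpha> i) (\<beta> i * \<theta>) $ j)"
proof (rule summable_comparison_test')
  from assms(2) have nonneg: "0 \<le> \<alpha> i" "0 \<le> \<beta> i" and "\<alpha> i \<le> \<alpha> 0"
    and summable: "summable (\<lambda>i. \<alpha> i + \<beta> i)" for i
    by (auto simp: VK_params_def antimono_def)
  define C where "C = (\<Sum>j\<le>n. (\<alpha> 0 + 1) ^ j * negbin_coeff \<theta> j)"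
  show "summable (\<lambda>i. (1 + \<theta>) * C * (\<alpha> i + \<beta> i))"
    by (intro summable_mult summable)
  fix i
  have C_nonneg: "0 \<le> C"
    using assms(1) nonneg by (auto simp: C_def negbin_coeff_def pochhammer_nonneg intro!: sum_nonneg)
  have "norm (\<Sum>j\<in>{1..n}. vk_factor \<theta> (\<alpha> i) (\<beta> i * \<theta>) $ j) =
      (\<Sum>j\<in>{1..n}. vk_factor \<theta> (\<alpha> i) (\<beta> i * \<theta>) $ j)"
    using assms(1) nonneg by (simp add: sum_nonneg vk_factor_nth_nonneg)
  also have "\<dots> \<le> (\<alpha> i + \<beta> i * \<theta>) * C"
    unfolding C_def using assms(1) nonneg \<open>\<alpha> i \<le> \<alpha> 0\<close> by (intro vk_factor_coeff_sum_le) auto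
  also have "\<dots> \<le> (1 + \<theta>) * (\<alpha> i + \<beta> i) * C"
    using assms(1) nonneg[of i] C_nonneg
    by (intro mult_right_mono) (simp_all add: algebra_simps add_increasing)
  finally show "norm (\<Sum>j\<in>{1..n}. vk_factor \<theta> (\<alpha> i) (\<beta> i * \<theta>) $ j) \<le> (1 + \<theta>) * C * (\<alpha> i + \<beta> i)"
    by (simp add: mult_ac)
qed

lemma fps_infprod_convergent_vk_factors:
  assumes "0 < \<theta>" and "VK_params \<alpha> \<beta> \<gamma>"
  shows "fps_infprod_convergent (\<lambda>i. fps_of_real (vk_factor \<theta> (\<alpha> i) (\<beta> i * \<theta>)) :: complex fps)"
  unfolding fps_infprod_convergent_def
proof
  fix n
  from assms(2) have "0 \<le> \<alpha> i" "0 \<le> \<beta> i" for i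
    by (auto simp: VK_params_def)
  with assms summable_vk_factor_coeff_sums have "convergent (\<lambda>N. (\<Prod>i<N. vk_factor \<theta> (\<alpha> i) (\<beta> i * \<theta>)) $ n)"
    by (intro convergent_prod_nth_nonneg vk_factor_nth_nonneg) auto
  then show "convergent (\<lambda>N. (\<Prod>i<N. fps_of_real (vk_factor \<theta> (\<alpha> i) (\<beta> i * \<theta>)) :: complex fps) $ n)"
    by (simp add: convergent_of_real flip: fps_of_real_prod)
qed

lemma fps_infprod_nth_LIMSEQ:
  assumes "fps_infprod_convergent F"
  shows "(\<lambda>N. (\<Prod>i<N. F i) $ n) \<longlonglongrightarrow> fps_infprod F $ n"
  using assms by (simp add: fps_infprod_convergent_def fps_infprod_def convergent_LIMSEQ_iff)

lemma pi_series_fps_infprod: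
  assumes "fps_infprod_convergent F"
  shows "fps_infprod_convergent (\<lambda>i. pi_series \<tau> (F i))"
    and "fps_infprod (\<lambda>i. pi_series \<tau> (F i)) = pi_series \<tau> (fps_infprod F)"
proof -
  \<comment> \<open>each coefficient of \<open>pi_series \<tau> A\<close> is a polynomial in finitely many coefficients of \<open>A\<close>\<close>
  have lim: "(\<lambda>N. (\<Prod>i<N. pi_series \<tau> (F i)) $ k) \<longlonglongrightarrow> pi_series \<tau> (fps_infprod F) $ k" for k
    unfolding pi_series_prod[symmetric] pi_series_nth
    by (intro tendsto_sum tendsto_mult tendsto_const fps_infprod_nth_LIMSEQ[OF assms])
  then show "fps_infprod_convergent (\<lambda>i. pi_series \<tau> (F i))"
    unfolding fps_infprod_convergent_def by (auto intro: convergentI)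
  show "fps_infprod (\<lambda>i. pi_series \<tau> (F i)) = pi_series \<tau> (fps_infprod F)"
    by (rule fps_ext) (simp add: fps_infprod_def limI[OF lim])
qed

section \<open>Symmetric functions\<close>

definition mon_divisors :: "(nat \<Rightarrow>\<^sub>0 nat) \<Rightarrow> (nat \<Rightarrow>\<^sub>0 nat) set" where
  "mon_divisors a = {b. \<forall>j. Poly_Mapping.lookup b j \<le> Poly_Mapping.lookup a j}"

lemma lookup_le_of_mon_divisors: "b \<in> mon_divisors a \<Longrightarrow> Poly_Mapping.lookup b j \<le> Poly_Mapping.lookup a j"
  by (simp add: mon_divisors_def)

lemma keys_subset_of_mon_divisors: "b \<in> mon_divisors a \<Longrightarrow> Poly_Mapping.keys b \<subseteq> Poly_Mapping.keys a"
  by (metis in_keys_iff le_zero_eq lookup_le_of_mon_divisors subsetI)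

lemma diff_in_mon_divisors: "c \<in> mon_divisors a \<Longrightarrow> a - c \<in> mon_divisors a"
  by (simp add: mon_divisors_def lookup_minus)

lemma diff_diff_mon_divisor: "c \<in> mon_divisors a \<Longrightarrow> a - (a - c) = c"
  by (rule poly_mapping_eqI) (auto simp: mon_divisors_def lookup_minus)

lemma bij_betw_mon_divisors_PiE:
  "bij_betw (\<lambda>b. restrict (Poly_Mapping.lookup b) (Poly_Mapping.keys a)) (mon_divisors a)
      (PiE (Poly_Mapping.keys a) (\<lambda>j. {..Poly_Mapping.lookup a j}))"
proof (rule bij_betw_byWitness[where f' = "\<lambda>g. Abs_poly_mapping (\<lambda>j. if j \<in> Poly_Mapping.keys a then g j else 0)"])
  have fin: "finite {j. (if j \<in> Poly_Mapping.keys a then g j else 0) \<noteq> (0::nat)}" for g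
    by (rule finite_subset[of _ "Poly_Mapping.keys a"]) auto
  show "\<forall>b\<in>mon_divisors a. Abs_poly_mapping (\<lambda>j. if j \<in> Poly_Mapping.keys a
      then restrict (Poly_Mapping.lookup b) (Poly_Mapping.keys a) j else 0) = b"
    by (auto intro!: poly_mapping_eqI simp: fin in_keys_iff) (metis le_zero_eq lookup_le_of_mon_divisors)
  show "\<forall>g\<in>PiE (Poly_Mapping.keys a) (\<lambda>j. {..Poly_Mapping.lookup a j}).
      restrict (Poly_Mapping.lookup (Abs_poly_mapping (\<lambda>j. if j \<in> Poly_Mapping.keys a then g j else 0)))
        (Poly_Mapping.keys a) = g"
    by (auto simp: fin PiE_def extensional_def restrict_def)
  show "(\<lambda>b. restrict (Poly_Mapping.lookup b) (Poly_Mapping.keys a)) ` mon_divisors a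
      \<subseteq> PiE (Poly_Mapping.keys a) (\<lambda>j. {..Poly_Mapping.lookup a j})"
    by (auto simp: mon_divisors_def)
  show "(\<lambda>g. Abs_poly_mapping (\<lambda>j. if j \<in> Poly_Mapping.keys a then g j else 0)) `
      PiE (Poly_Mapping.keys a) (\<lambda>j. {..Poly_Mapping.lookup a j}) \<subseteq> mon_divisors a"
    by (auto simp: fin mon_divisors_def in_keys_iff PiE_def Pi_def)
qed

lemma finite_mon_divisors [simp]: "finite (mon_divisors a)"
  using bij_betw_finite[OF bij_betw_mon_divisors_PiE[of a]] by (simp add: finite_PiE)

lemma sum_mon_divisors_prod:
  fixes h :: "nat \<Rightarrow> nat \<Rightarrow> 'c::comm_semiring_1"
  shows "(\<Sum>b\<in>mon_divisors a. \<Prod>j\<in>Poly_Mapping.keys a. h j (Poly_Mapping.lookup b j)) =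
         (\<Prod>j\<in>Poly_Mapping.keys a. \<Sum>i\<le>Poly_Mapping.lookup a j. h j i)"
proof -
  have "(\<Prod>j\<in>Poly_Mapping.keys a. \<Sum>i\<le>Poly_Mapping.lookup a j. h j i) =
        (\<Sum>g\<in>PiE (Poly_Mapping.keys a) (\<lambda>j. {..Poly_Mapping.lookup a j}). \<Prod>j\<in>Poly_Mapping.keys a. h j (g j))"
    by (rule prod_sum_PiE) auto
  also have "\<dots> = (\<Sum>b\<in>mon_divisors a. \<Prod>j\<in>Poly_Mapping.keys a.
      h j (restrict (Poly_Mapping.lookup b) (Poly_Mapping.keys a) j))"
    by (rule sum.reindex_bij_betw[OF bij_betw_mon_divisors_PiE, symmetric])
  finally show ?thesis by simp
qed

lemma mdeg_eq_sum_superset: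
  "finite K \<Longrightarrow> Poly_Mapping.keys b \<subseteq> K \<Longrightarrow> mdeg b = (\<Sum>j\<in>K. Poly_Mapping.lookup b j)"
  unfolding mdeg_def by (rule sum.mono_neutral_left) (auto simp: in_keys_iff)

lemma prod_keys_eq_prod_superset:
  assumes "finite K" "Poly_Mapping.keys b \<subseteq> K" "f 0 = 1"
  shows "(\<Prod>j\<in>Poly_Mapping.keys b. f (Poly_Mapping.lookup b j)) = (\<Prod>j\<in>K. f (Poly_Mapping.lookup b j))"
  using assms by (intro prod.mono_neutral_left) (auto simp: in_keys_iff)

lemma mdeg_add_diff:
  assumes "c \<in> mon_divisors a"
  shows "mdeg a = mdeg c + mdeg (a - c)"
proof -
  have "mdeg a = (\<Sum>j\<in>Poly_Mapping.keys a.
      Poly_Mapping.lookup c j + (Poly_Mapping.lookup a j - Poly_Mapping.lookup c j))"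
    unfolding mdeg_def using lookup_le_of_mon_divisors[OF assms] by (intro sum.cong) auto
  also have "\<dots> = mdeg c + mdeg (a - c)"
    using keys_subset_of_mon_divisors[OF assms] keys_subset_of_mon_divisors[OF diff_in_mon_divisors[OF assms]]
    by (simp add: sum.distrib mdeg_eq_sum_superset[of "Poly_Mapping.keys a"] lookup_minus)
  finally show ?thesis .
qed

lemma mdeg_eq_0_iff: "mdeg a = 0 \<longleftrightarrow> a = 0"
proof
  assume "mdeg a = 0"
  then show "a = 0" by (intro poly_mapping_eqI) (auto simp: mdeg_def in_keys_iff)
qed (simp add: mdeg_def)

definition negbin_mon :: "real \<Rightarrow> (nat \<Rightarrow>\<^sub>0 nat) \<Rightarrow> complex" where
  "negbin_mon \<theta> b = (\<Prod>j\<in>Poly_Mapping.keys b. negbin_coeff (of_real \<theta>) (Poly_Mapping.lookup b j))"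

lemma gk_eq: "gk \<theta> k b = (if mdeg b = k then negbin_mon \<theta> b else 0)"
  by (simp add: gk_def negbin_mon_def negbin_coeff_def)

lemma gk_0: "gk \<theta> 0 = sf_one"
  by (rule ext) (simp add: gk_eq mdeg_eq_0_iff sf_one_def negbin_mon_def)

definition permute_mon :: "(nat \<Rightarrow> nat) \<Rightarrow> (nat \<Rightarrow>\<^sub>0 nat) \<Rightarrow> (nat \<Rightarrow>\<^sub>0 nat)" where
  "permute_mon \<sigma> c = Abs_poly_mapping (\<lambda>j. Poly_Mapping.lookup c (\<sigma> j))"

lemma lookup_permute_mon:
  assumes "inj \<sigma>"
  shows "Poly_Mapping.lookup (permute_mon \<sigma> c) j = Poly_Mapping.lookup c (\<sigma> j)"
proof -
  have "finite {j. Poly_Mapping.lookup c (\<sigma> j) \<noteq> 0}"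
    using finite_vimageI[OF finite_lookup assms] unfolding vimage_def mem_Collect_eq .
  then show ?thesis by (simp add: permute_mon_def)
qed

lemma sf_symmetric_iff_permute_mon:
  "sf_symmetric f \<longleftrightarrow> (\<forall>a \<sigma>. bij \<sigma> \<longrightarrow> f (permute_mon \<sigma> a) = f a)"
proof -
  have "b = permute_mon \<sigma> a \<longleftrightarrow> (\<forall>j. Poly_Mapping.lookup b j = Poly_Mapping.lookup a (\<sigma> j))"
    if "bij \<sigma>" for a b \<sigma>
    using that by (auto simp: lookup_permute_mon bij_is_inj intro: poly_mapping_eqI)
  then show ?thesis unfolding sf_symmetric_def by metis
qed

lemma bij_betw_keys_permute_mon:
  assumes "bij \<sigma>"
  shows "bij_betw \<sigma> (Poly_Mapping.keys (permute_mon \<sigma> a)) (Poly_Mapping.keys a)"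
proof -
  have "Poly_Mapping.keys (permute_mon \<sigma> a) = \<sigma> -` Poly_Mapping.keys a"
    using assms by (auto simp: in_keys_iff lookup_permute_mon bij_is_inj)
  with assms show ?thesis
    by (auto simp: bij_betw_def bij_is_surj image_vimage_eq intro: inj_on_subset[OF bij_is_inj])
qed

lemma gk_in_Lam: "gk \<theta> k \<in> Lam"
proof -
  have "gk \<theta> k (permute_mon \<sigma> a) = gk \<theta> k a" if "bij \<sigma>" for a \<sigma>
  proof -
    note keys = bij_betw_keys_permute_mon[OF that]
    have lookup: "Poly_Mapping.lookup (permute_mon \<sigma> a) j = Poly_Mapping.lookup a (\<sigma> j)" for j
      using that by (simp add: lookup_permute_mon bij_is_inj)
    have "mdeg (permute_mon \<sigma> a) = mdeg a"
      unfolding mdeg_def using sum.reindex_bij_betw[OF keys, of "Poly_Mapping.lookup a"] by (simp add: lookup)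
    moreover have "negbin_mon \<theta> (permute_mon \<sigma> a) = negbin_mon \<theta> a"
      unfolding negbin_mon_def
      using prod.reindex_bij_betw[OF keys, of "\<lambda>i. negbin_coeff (of_real \<theta>) (Poly_Mapping.lookup a i)"]
      by (simp add: lookup)
    ultimately show ?thesis by (simp add: gk_eq)
  qed
  then show ?thesis unfolding Lam_def sf_symmetric_iff_permute_mon by (auto simp: gk_eq)
qed

lemma sf_one_in_Lam: "sf_one \<in> Lam"
  by (metis gk_in_Lam gk_0)

lemma zero_in_Lam: "(\<lambda>a. 0) \<in> Lam"
  by (simp add: Lam_def sf_symmetric_def)

lemma sf_add_in_Lam:
  assumes "f \<in> Lam" "g \<in> Lam"
  shows "sf_add f g \<in> Lam"
proof -
  from assms obtain d1 d2 where sym: "sf_symmetric f" "sf_symmetric g"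
    and d1: "\<forall>a. f a \<noteq> 0 \<longrightarrow> mdeg a \<le> d1" and d2: "\<forall>a. g a \<noteq> 0 \<longrightarrow> mdeg a \<le> d2"
    by (auto simp: Lam_def)
  have "sf_symmetric (sf_add f g)"
    using sym unfolding sf_symmetric_def sf_add_def by metis
  moreover have "\<forall>a. sf_add f g a \<noteq> 0 \<longrightarrow> mdeg a \<le> max d1 d2"
    using d1 d2 unfolding sf_add_def by (metis add.right_neutral add_0 max.coboundedI1 max.coboundedI2)
  ultimately show ?thesis unfolding Lam_def by blast
qed

lemma sf_scale_in_Lam: "f \<in> Lam \<Longrightarrow> sf_scale c f \<in> Lam"
  unfolding Lam_def sf_symmetric_def sf_scale_def by auto

lemma sf_symmetric_sf_mult:
  assumes f: "sf_symmetric f" and g: "sf_symmetric g"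
  shows "sf_symmetric (sf_mult f g)"
  unfolding sf_symmetric_iff_permute_mon
proof (intro allI impI)
  fix a :: "nat \<Rightarrow>\<^sub>0 nat" and \<sigma> :: "nat \<Rightarrow> nat"
  assume "bij \<sigma>"
  let ?p = "permute_mon \<sigma>" and ?q = "permute_mon (inv \<sigma>)"
  have "bij (inv \<sigma>)" using \<open>bij \<sigma>\<close> by (rule bij_imp_bij_inv)
  then have lookup: "Poly_Mapping.lookup (?p c) j = Poly_Mapping.lookup c (\<sigma> j)"
    "Poly_Mapping.lookup (?q c) j = Poly_Mapping.lookup c (inv \<sigma> j)" for c j
    using \<open>bij \<sigma>\<close> by (simp_all add: lookup_permute_mon bij_is_inj)
  have inv: "inv \<sigma> (\<sigma> j) = j" "\<sigma> (inv \<sigma> j) = j" for j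
    using \<open>bij \<sigma>\<close> by (simp_all add: bij_is_inj bij_is_surj surj_f_inv_f)
  have pq: "?p (?q c) = c" and qp: "?q (?p c) = c" for c
    by (simp_all add: poly_mapping_eqI lookup inv)
  have p_diff: "?p (a - c) = ?p a - ?p c" for c
    by (rule poly_mapping_eqI) (simp add: lookup lookup_minus)
  have f_p: "f (?p c) = f c" and g_p: "g (?p c) = g c" for c
    using f g \<open>bij \<sigma>\<close> unfolding sf_symmetric_iff_permute_mon by blast+
  show "sf_mult f g (?p a) = sf_mult f g a"
    unfolding sf_mult_def
  proof (rule sum.reindex_bij_witness[where i = ?p and j = ?q])
    fix c assume "c \<in> {c. \<forall>j. Poly_Mapping.lookup c j \<le> Poly_Mapping.lookup (?p a) j}"
    then show "?q c \<in> {c. \<forall>j. Poly_Mapping.lookup c j \<le> Poly_Mapping.lookup a j}"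
      by (simp add: lookup) (metis inv(2))
    show "?p (?q c) = c" by (rule pq)
    show "f (?q c) * g (a - ?q c) = f c * g (?p a - c)"
      by (metis f_p g_p p_diff pq)
  next
    fix c assume "c \<in> {c. \<forall>j. Poly_Mapping.lookup c j \<le> Poly_Mapping.lookup a j}"
    then show "?p c \<in> {c. \<forall>j. Poly_Mapping.lookup c j \<le> Poly_Mapping.lookup (?p a) j}"
      by (simp add: lookup)
    show "?q (?p c) = c" by (rule qp)
  qed
qed

lemma sf_mult_in_Lam:
  assumes "f \<in> Lam" "g \<in> Lam"
  shows "sf_mult f g \<in> Lam"
proof -
  from assms obtain d1 d2 where sym: "sf_symmetric f" "sf_symmetric g"
    and d1: "\<forall>a. f a \<noteq> 0 \<longrightarrow> mdeg a \<le> d1" and d2: "\<forall>a. g a \<noteq> 0 \<longrightarrow> mdeg a \<le> d2"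
    by (auto simp: Lam_def)
  have "mdeg a \<le> d1 + d2" if "sf_mult f g a \<noteq> 0" for a
  proof -
    from that obtain c where c: "c \<in> mon_divisors a" "f c * g (a - c) \<noteq> 0"
      unfolding sf_mult_def mon_divisors_def[symmetric] by (meson sum.not_neutral_contains_not_neutral)
    then show ?thesis using d1 d2 mdeg_add_diff[OF c(1)] by (metis add_mono mult_not_zero)
  qed
  with sf_symmetric_sf_mult[OF sym] show ?thesis by (auto simp: Lam_def)
qed

lemma sum_in_Lam: "finite S \<Longrightarrow> (\<And>i. i \<in> S \<Longrightarrow> F i \<in> Lam) \<Longrightarrow> (\<lambda>a. \<Sum>i\<in>S. F i a) \<in> Lam"
proof (induction S rule: finite_induct)
  case (insert x S)
  then have "sf_add (F x) (\<lambda>a. \<Sum>i\<in>S. F i a) \<in> Lam" by (simp add: sf_add_in_Lam)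
  with insert show ?case by (simp add: sf_add_def)
qed (simp add: zero_in_Lam)

lemma sf_alg_hom_sum:
  assumes "sf_alg_hom E" and "finite S" and "\<And>i. i \<in> S \<Longrightarrow> F i \<in> Lam"
  shows "E (\<lambda>a. \<Sum>i\<in>S. F i a) = (\<Sum>i\<in>S. E (F i))"
  using assms(2,3)
proof (induction S rule: finite_induct)
  case empty
  have "(\<lambda>a. 0) = sf_scale 0 sf_one" by (simp add: sf_scale_def)
  with assms(1) sf_one_in_Lam show ?case by (simp add: sf_alg_hom_def)
next
  case (insert x S)
  have "E (sf_add (F x) (\<lambda>a. \<Sum>i\<in>S. F i a)) = E (F x) + E (\<lambda>a. \<Sum>i\<in>S. F i a)"
    using assms(1) insert by (simp add: sf_alg_hom_def sum_in_Lam)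
  with insert show ?case by (simp add: sf_add_def)
qed

definition pi_tau_coeff :: "complex \<Rightarrow> (nat \<Rightarrow>\<^sub>0 nat) \<Rightarrow> (nat \<Rightarrow>\<^sub>0 nat) \<Rightarrow> complex" where
  "pi_tau_coeff \<tau> a b = (\<Prod>j\<in>Poly_Mapping.keys a.
     of_nat (Poly_Mapping.lookup b j choose (Poly_Mapping.lookup a j - Poly_Mapping.lookup b j)) *
     \<tau> ^ (2 * Poly_Mapping.lookup b j - Poly_Mapping.lookup a j))"

text \<open>The coefficient of \<open>x\<^sup>a\<close> in \<open>G(X) G(V)\<close>.\<close>
definition GXV_coeff :: "real \<Rightarrow> complex \<Rightarrow> (nat \<Rightarrow>\<^sub>0 nat) \<Rightarrow> complex fps" where
  "GXV_coeff \<theta> \<tau> a = (\<Prod>j\<in>Poly_Mapping.keys a. \<Sum>i\<le>Poly_Mapping.lookup a j.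
     fps_const (negbin_coeff (of_real \<theta>) i * negbin_coeff (of_real \<theta>) (Poly_Mapping.lookup a j - i)) *
     fps_X ^ i * V_tau \<tau> ^ (Poly_Mapping.lookup a j - i))"

lemma negbin_mon_eq_prod_superset:
  "b \<in> mon_divisors a \<Longrightarrow>
     negbin_mon \<theta> b = (\<Prod>j\<in>Poly_Mapping.keys a. negbin_coeff (of_real \<theta>) (Poly_Mapping.lookup b j))"
  unfolding negbin_mon_def by (rule prod_keys_eq_prod_superset) (simp_all add: keys_subset_of_mon_divisors)

lemma pi_tau_gk_series_compose_T_tau:
  "Abs_fps (\<lambda>k. pi_tau \<tau> (gk \<theta> k) a) oo T_tau \<tau> = GXV_coeff \<theta> \<tau> a"
proof -
  have "Abs_fps (\<lambda>k. pi_tau \<tau> (gk \<theta> k) a) =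
      (\<Sum>b\<in>mon_divisors a. fps_const (negbin_mon \<theta> b * pi_tau_coeff \<tau> a b) * fps_X ^ mdeg b)"
    by (rule fps_ext)
       (auto simp: fps_sum_nth pi_tau_def gk_eq pi_tau_coeff_def mon_divisors_def intro!: sum.cong)
  then have "Abs_fps (\<lambda>k. pi_tau \<tau> (gk \<theta> k) a) oo T_tau \<tau> =
      (\<Sum>b\<in>mon_divisors a. fps_const (negbin_mon \<theta> b * pi_tau_coeff \<tau> a b) * T_tau \<tau> ^ mdeg b)"
    by (simp add: fps_compose_sum_distrib fps_compose_mult_distrib flip: fps_compose_power)
  also have "\<dots> = (\<Sum>b\<in>mon_divisors a. \<Prod>j\<in>Poly_Mapping.keys a.
      fps_const (negbin_coeff (of_real \<theta>) (Poly_Mapping.lookup b j) *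
        of_nat (Poly_Mapping.lookup b j choose (Poly_Mapping.lookup a j - Poly_Mapping.lookup b j)) *
        \<tau> ^ (2 * Poly_Mapping.lookup b j - Poly_Mapping.lookup a j)) * T_tau \<tau> ^ Poly_Mapping.lookup b j)"
  proof (intro sum.cong refl)
    fix b assume b: "b \<in> mon_divisors a"
    show "fps_const (negbin_mon \<theta> b * pi_tau_coeff \<tau> a b) * T_tau \<tau> ^ mdeg b = (\<Prod>j\<in>Poly_Mapping.keys a.
      fps_const (negbin_coeff (of_real \<theta>) (Poly_Mapping.lookup b j) *
        of_nat (Poly_Mapping.lookup b j choose (Poly_Mapping.lookup a j - Poly_Mapping.lookup b j)) *
        \<tau> ^ (2 * Poly_Mapping.lookup b j - Poly_Mapping.lookup a j)) * T_tau \<tau> ^ Poly_Mapping.lookup b j)"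
      using keys_subset_of_mon_divisors[OF b]
      by (simp only: negbin_mon_eq_prod_superset[OF b] pi_tau_coeff_def
          mdeg_eq_sum_superset[of "Poly_Mapping.keys a"] finite_keys power_sum mult.assoc
          fps_const_prod flip: prod.distrib)
  qed
  also have "\<dots> = (\<Prod>j\<in>Poly_Mapping.keys a. \<Sum>i\<le>Poly_Mapping.lookup a j.
      fps_const (negbin_coeff (of_real \<theta>) i * of_nat (i choose (Poly_Mapping.lookup a j - i)) *
        \<tau> ^ (2 * i - Poly_Mapping.lookup a j)) * T_tau \<tau> ^ i)"
    by (rule sum_mon_divisors_prod)
  also have "\<dots> = GXV_coeff \<theta> \<tau> a"
    unfolding GXV_coeff_def negbin_coeff_convolution_X_V_tau ..
  finally show ?thesis .
qed

lemma sum_sum_delta: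
  fixes F :: "nat \<Rightarrow> nat \<Rightarrow> 'c::comm_semiring_1"
  shows "(\<Sum>m\<le>M. \<Sum>n\<le>M. F m n * ((if p = m then x else 0) * (if q = n then y else 0))) =
         (if p \<le> M \<and> q \<le> M then F p q * x * y else 0)"
proof -
  have "(\<Sum>n\<le>M. F m n * (u * (if q = n then y else 0))) = (if q \<le> M then F m q * u * y else 0)" for m u
  proof -
    have "(\<Sum>n\<le>M. F m n * (u * (if q = n then y else 0))) = (\<Sum>n\<le>M. if q = n then F m q * u * y else 0)"
      by (intro sum.cong refl) (auto simp: mult_ac)
    then show ?thesis by (simp add: sum.delta')
  qed
  then have "(\<Sum>m\<le>M. \<Sum>n\<le>M. F m n * ((if p = m then x else 0) * (if q = n then y else 0))) =
      (\<Sum>m\<le>M. if p = m then (if q \<le> M then F p q * x * y else 0) else 0)"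
    by (intro sum.cong refl) auto
  then show ?thesis by (simp add: sum.delta')
qed

lemma kernel_gk_series_eq:
  "Abs_fps (\<lambda>k. \<Sum>m\<le>2*k. \<Sum>n\<le>2*k. sym_kernel \<tau> m n $ k * sf_mult (gk \<theta> m) (gk \<theta> n) a) =
   (\<Sum>c\<in>mon_divisors a. fps_const (negbin_mon \<theta> c * negbin_mon \<theta> (a - c)) * sym_kernel \<tau> (mdeg c) (mdeg (a - c)))"
proof (rule fps_ext)
  fix k
  have "(\<Sum>m\<le>2*k. \<Sum>n\<le>2*k. sym_kernel \<tau> m n $ k * sf_mult (gk \<theta> m) (gk \<theta> n) a) =
      (\<Sum>c\<in>mon_divisors a. \<Sum>m\<le>2*k. \<Sum>n\<le>2*k. sym_kernel \<tau> m n $ k * (gk \<theta> m c * gk \<theta> n (a - c)))"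
    unfolding sf_mult_def mon_divisors_def[symmetric] sum_distrib_left
    by (subst sum.swap, subst (2) sum.swap) (rule refl)
  also have "\<dots> = (\<Sum>c\<in>mon_divisors a.
      sym_kernel \<tau> (mdeg c) (mdeg (a - c)) $ k * (negbin_mon \<theta> c * negbin_mon \<theta> (a - c)))"
    unfolding gk_eq sum_sum_delta by (intro sum.cong refl) (auto simp: sym_kernel_nth_eq_0 mult.assoc)
  finally show "Abs_fps (\<lambda>k. \<Sum>m\<le>2*k. \<Sum>n\<le>2*k. sym_kernel \<tau> m n $ k * sf_mult (gk \<theta> m) (gk \<theta> n) a) $ k =
      (\<Sum>c\<in>mon_divisors a. fps_const (negbin_mon \<theta> c * negbin_mon \<theta> (a - c)) *
        sym_kernel \<tau> (mdeg c) (mdeg (a - c))) $ k"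
    by (simp add: fps_sum_nth mult.commute)
qed

lemma kernel_gk_series_compose_T_tau:
  "Abs_fps (\<lambda>k. \<Sum>m\<le>2*k. \<Sum>n\<le>2*k. sym_kernel \<tau> m n $ k * sf_mult (gk \<theta> m) (gk \<theta> n) a) oo T_tau \<tau>
   = GXV_coeff \<theta> \<tau> a"
proof -
  define W where "W c = negbin_mon \<theta> c * negbin_mon \<theta> (a - c)" for c
  define S where "S = (\<Sum>c\<in>mon_divisors a. fps_const (W c) * (fps_X ^ mdeg c * V_tau \<tau> ^ mdeg (a - c)))"
  \<comment> \<open>the two halves of the symmetrised kernel are exchanged by \<open>c \<mapsto> a - c\<close>\<close>
  have swap: "(\<Sum>c\<in>mon_divisors a. fps_const (W c) * (fps_X ^ mdeg (a - c) * V_tau \<tau> ^ mdeg c)) = S"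
    unfolding S_def W_def
    by (rule sum.reindex_bij_witness[of _ "\<lambda>c. a - c" "\<lambda>c. a - c"])
       (auto simp: diff_diff_mon_divisor diff_in_mon_divisors mult.commute)
  have "Abs_fps (\<lambda>k. \<Sum>m\<le>2*k. \<Sum>n\<le>2*k. sym_kernel \<tau> m n $ k * sf_mult (gk \<theta> m) (gk \<theta> n) a) oo T_tau \<tau> =
      fps_const (1/2) * (S + (\<Sum>c\<in>mon_divisors a. fps_const (W c) * (fps_X ^ mdeg (a - c) * V_tau \<tau> ^ mdeg c)))"
    unfolding kernel_gk_series_eq W_def[symmetric] S_def
    by (simp add: fps_compose_sum_distrib fps_compose_mult_distrib sym_kernel_compose_T_tau
        sum_distrib_left sum.distrib ring_distribs mult.left_commute del: fps_const_mult)
  also have "\<dots> = S" unfolding swap fps_const_half_mult_double ..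
  also have "S = (\<Sum>c\<in>mon_divisors a. \<Prod>j\<in>Poly_Mapping.keys a.
      fps_const (negbin_coeff (of_real \<theta>) (Poly_Mapping.lookup c j) *
        negbin_coeff (of_real \<theta>) (Poly_Mapping.lookup a j - Poly_Mapping.lookup c j)) *
      fps_X ^ Poly_Mapping.lookup c j * V_tau \<tau> ^ (Poly_Mapping.lookup a j - Poly_Mapping.lookup c j))"
    unfolding S_def
  proof (intro sum.cong refl)
    fix c assume c: "c \<in> mon_divisors a"
    note ac = diff_in_mon_divisors[OF c]
    show "fps_const (W c) * (fps_X ^ mdeg c * V_tau \<tau> ^ mdeg (a - c)) = (\<Prod>j\<in>Poly_Mapping.keys a.
        fps_const (negbin_coeff (of_real \<theta>) (Poly_Mapping.lookup c j) *
          negbin_coeff (of_real \<theta>) (Poly_Mapping.lookup a j - Poly_Mapping.lookup c j)) *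
        fps_X ^ Poly_Mapping.lookup c j * V_tau \<tau> ^ (Poly_Mapping.lookup a j - Poly_Mapping.lookup c j))"
      using keys_subset_of_mon_divisors[OF c] keys_subset_of_mon_divisors[OF ac]
      by (simp only: W_def negbin_mon_eq_prod_superset[OF c] negbin_mon_eq_prod_superset[OF ac]
          lookup_minus mdeg_eq_sum_superset[of "Poly_Mapping.keys a"] finite_keys power_sum
          fps_const_prod mult.assoc flip: prod.distrib)
  qed
  also have "\<dots> = GXV_coeff \<theta> \<tau> a"
    unfolding GXV_coeff_def by (rule sum_mon_divisors_prod)
  finally show ?thesis .
qed

lemma pi_tau_gk_eq:
  "pi_tau \<tau> (gk \<theta> k) = (\<lambda>a. \<Sum>m\<le>2*k. \<Sum>n\<le>2*k. sym_kernel \<tau> m n $ k * sf_mult (gk \<theta> m) (gk \<theta> n) a)"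
proof
  fix a
  have eq: "Abs_fps (\<lambda>k. pi_tau \<tau> (gk \<theta> k) a) =
      Abs_fps (\<lambda>k. \<Sum>m\<le>2*k. \<Sum>n\<le>2*k. sym_kernel \<tau> m n $ k * sf_mult (gk \<theta> m) (gk \<theta> n) a)"
    by (rule fps_compose_right_cancel[where a = "T_tau \<tau>", OF T_tau_nth_0 T_tau_neq_0])
       (simp only: pi_tau_gk_series_compose_T_tau kernel_gk_series_compose_T_tau)
  show "pi_tau \<tau> (gk \<theta> k) a = (\<Sum>m\<le>2*k. \<Sum>n\<le>2*k. sym_kernel \<tau> m n $ k * sf_mult (gk \<theta> m) (gk \<theta> n) a)"
    using arg_cong[where f = "\<lambda>F. F $ k", OF eq] by (simp only: fps_nth_Abs_fps)
qed

lemma sf_alg_hom_pi_tau_gk: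
  assumes "sf_alg_hom E"
  shows "E (pi_tau \<tau> (gk \<theta> k)) = pi_series \<tau> (Abs_fps (\<lambda>m. E (gk \<theta> m))) $ k"
proof -
  define F where "F p = sf_scale (sym_kernel \<tau> (fst p) (snd p) $ k) (sf_mult (gk \<theta> (fst p)) (gk \<theta> (snd p)))"
    for p
  have F_in_Lam: "F p \<in> Lam" for p
    unfolding F_def by (intro sf_scale_in_Lam sf_mult_in_Lam gk_in_Lam)
  have "pi_tau \<tau> (gk \<theta> k) = (\<lambda>a. \<Sum>p\<in>{..2*k} \<times> {..2*k}. F p a)"
    by (simp add: pi_tau_gk_eq sum.cartesian_product F_def sf_scale_def case_prod_beta)
  then have "E (pi_tau \<tau> (gk \<theta> k)) = (\<Sum>p\<in>{..2*k} \<times> {..2*k}. E (F p))"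
    using sf_alg_hom_sum[OF assms, of "{..2*k} \<times> {..2*k}" F] F_in_Lam by simp
  also have "\<dots> = (\<Sum>m\<le>2*k. \<Sum>n\<le>2*k. sym_kernel \<tau> m n $ k * E (gk \<theta> m) * E (gk \<theta> n))"
    using assms gk_in_Lam sf_mult_in_Lam[OF gk_in_Lam gk_in_Lam]
    by (simp add: F_def sf_alg_hom_def sum.cartesian_product case_prod_beta mult.assoc)
  finally show ?thesis by (simp add: pi_series_nth)
qed

theorem proposition3p2:
  fixes \<theta> :: real and \<tau> :: complex and \<alpha> \<beta> :: "nat \<Rightarrow> real" and \<gamma> :: real
    and E :: "sfun \<Rightarrow> complex"
  assumes "\<theta> > 0"
    and "VK_params \<alpha> \<beta> \<gamma>"
    and "is_eps \<theta> \<alpha> \<beta> \<gamma> E"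
  defines "F \<equiv> (\<lambda>i. (1 + fps_const (of_real \<theta> * of_real (\<beta> i) * (\<tau> - of_real \<theta> * of_real (\<beta> i))) * fps_X) *
                     fps_one_minus_pow (of_real (\<alpha> i) * (\<tau> + of_real (\<alpha> i))) (- of_real \<theta>))"
  shows "fps_infprod_convergent F \<and>
         Abs_fps (\<lambda>k. if k = 0 then 1 else E (pi_tau \<tau> (gk \<theta> k))) =
           fps_exp (of_real \<gamma> * of_real \<theta> * \<tau>) * fps_infprod F"
proof -
  define f :: "nat \<Rightarrow> complex fps" where "f = (\<lambda>i. fps_of_real (vk_factor \<theta> (\<alpha> i) (\<beta> i * \<theta>)))"
  define \<Phi> where "\<Phi> = Abs_fps (\<lambda>k. E (gk \<theta> k))"
  have hom: "sf_alg_hom E" using assms(3) by (simp add: is_eps_def)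
  then have "\<Phi> $ 0 = 1" by (simp add: \<Phi>_def gk_0 sf_alg_hom_def)
  then have "\<Phi> = Abs_fps (\<lambda>k. if k = 0 then 1 else E (gk \<theta> k))"
    by (auto simp: \<Phi>_def fps_eq_iff)
  then have \<Phi>_eq: "\<Phi> = fps_exp (of_real (\<gamma> * \<theta>)) * fps_infprod f"
    using assms(3) by (simp add: is_eps_def f_def fps_of_real_vk_factor)
  have conv: "fps_infprod_convergent f"
    unfolding f_def by (rule fps_infprod_convergent_vk_factors[OF assms(1,2)])
  have F_eq: "F = (\<lambda>i. pi_series \<tau> (f i))"
    unfolding F_def f_def fps_of_real_vk_factor pi_series_vk_factor by (simp add: mult_ac)
  have "Abs_fps (\<lambda>k. if k = 0 then 1 else E (pi_tau \<tau> (gk \<theta> k))) = pi_series \<tau> \<Phi>"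
    using \<open>\<Phi> $ 0 = 1\<close>
    by (auto simp: fps_eq_iff pi_series_nth_0 sf_alg_hom_pi_tau_gk[OF hom] \<Phi>_def[symmetric])
  also have "\<dots> = fps_exp (of_real \<gamma> * of_real \<theta> * \<tau>) * fps_infprod F"
    unfolding \<Phi>_eq pi_series_mult pi_series_exp F_eq pi_series_fps_infprod(2)[OF conv]
    by (simp add: mult_ac)
  finally show ?thesis
    using pi_series_fps_infprod(1)[OF conv] F_eq by simp
qed

end
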